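(* For $q>1$ and $0<u<1$, the function \[ N_{u,q}(\lambda)=\prod_{r=1}^\infty\Bigl(1-\frac{u}{q^r}\Bigr)\frac{u^{|\lambda|-1}(q^{\lambda'_1}-1)}{\prod_i q^{(\lambda'_i)^2}(\frac1q)_{m_i(\lambda)}}, \] defined on the set of all partitions $\lambda$ of all positive integers, is a probability measure (it is nonnegative and sums to $1$).
   Context: For a partition $\lambda$: $|\lambda|$ is its size, $m_i(\lambda)$ the number of parts equal to $i$, $\lambda'$ the conjugate partition with $\lambda'_i=\sum_{j\ge i}m_j(\lambda)$ (so $\lambda'_1$ is the number of parts). $(\frac1q)_i=\prod_{j=1}^i(1-q^{-j})$, $(\frac1q)_0=1$. *)

theory Defs
  imports "HOL-Analysis.Analysis" "HOL-Library.Multiset"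
begin

definition is_partition :: "nat multiset \<Rightarrow> bool" where
  "is_partition lam \<longleftrightarrow> (\<forall>x\<in>#lam. 0 < x)"

definition psize :: "nat multiset \<Rightarrow> nat" where
  "psize lam = sum_mset lam"

definition mult_part :: "nat multiset \<Rightarrow> nat \<Rightarrow> nat" where
  "mult_part lam i = count lam i"

definition conj_part :: "nat multiset \<Rightarrow> nat \<Rightarrow> nat" where
  "conj_part lam i = size (filter_mset (\<lambda>j. i \<le> j) lam)"

definition qpoch_inv :: "real \<Rightarrow> nat \<Rightarrow> real" where
  "qpoch_inv q i = (\<Prod>j=1..i. 1 - 1 / q ^ j)"

text \<open>The measure N_{u,q}. The product over i ranges over i \<ge> 1; factors with i larger
  than the largest part equal 1, so it suffices to take i \<in> {1..|lam|}.\<close>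
definition N_uq :: "real \<Rightarrow> real \<Rightarrow> nat multiset \<Rightarrow> real" where
  "N_uq u q lam =
     (\<Prod>r. 1 - u / q ^ Suc r) *
     (u ^ (psize lam - 1) * (q ^ conj_part lam 1 - 1) /
      (\<Prod>i=1..psize lam. q ^ ((conj_part lam i)^2) * qpoch_inv q (mult_part lam i)))"

end

theory Submission
  imports Defs
begin

text \<open>
Write w(\<lambda>) = u^|\<lambda>| / \<Prod>_i q^((\<lambda>'_i)^2) (1/q)_(m_i(\<lambda>)), so that
N(\<lambda>) = (C/u) (q^(\<lambda>'_1) - 1) w(\<lambda>) with C = (u/q; 1/q)_\<infinity>.
Deleting the first column of the Young diagram maps the partitions with k parts bijectively onto
the partitions with at most k parts, and multiplies w by q^(k^2) (1/q)_(k-j) / u^k when the image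
has j parts. Hence the masses F_k = \<Sum>_(\<lambda>'_1 = k) w(\<lambda>) satisfy a triangular linear
system whose diagonal coefficients u^k / q^(k^2) are less than 1. Its unique solution is
F_k = u^k / (q^(k^2) (1/q)_k (u/q)_k), by the finite identity
\<Sum>_(j \<le> K) F_j / (1/q)_(K-j) = 1 / ((1/q)_K (u/q)_K), proved by induction on K with u
replaced by u/q in the induction hypothesis. Letting K \<rightarrow> \<infinity> gives \<Sum>_k F_k = 1/C;
since (q^k - 1) F_k(u) is a multiple of F_(k-1)(u/q), also \<Sum>_k (q^k - 1) F_k = u/C, and the
total mass of N is (C/u) (u/C) = 1.
\<close>

section \<open>q-Pochhammer symbols\<close>

definition qpoch :: "real \<Rightarrow> real \<Rightarrow> nat \<Rightarrow> real" where
  "qpoch q u n = (\<Prod>r<n. 1 - u / q ^ Suc r)"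

definition qpoch_inf :: "real \<Rightarrow> real \<Rightarrow> real" where
  "qpoch_inf q u = (\<Prod>r. 1 - u / q ^ Suc r)"

lemma qpoch_0 [simp]: "qpoch q u 0 = 1"
  by (simp add: qpoch_def)

lemma qpoch_Suc: "qpoch q u (Suc n) = qpoch q u n * (1 - u / q ^ Suc n)"
  by (simp add: qpoch_def)

lemma qpoch_Suc_shift: "q \<noteq> 0 \<Longrightarrow> qpoch q u (Suc n) = (1 - u / q) * qpoch q (u / q) n"
  unfolding qpoch_def prod.lessThan_Suc_shift by (simp add: field_simps)

lemma qpoch_inv_eq_qpoch: "qpoch_inv q n = qpoch q 1 n"
  by (induction n) (simp_all add: qpoch_inv_def qpoch_Suc)

lemma divide_q_bounds:
  fixes q u :: real
  assumes "1 < q" "0 \<le> u" "u < q"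
  shows "0 \<le> u / q" "u / q < q"
proof -
  show "0 \<le> u / q"
    using assms by simp
  have "u / q < 1"
    using assms by simp
  then show "u / q < q"
    using assms(1) by linarith
qed

lemma qpoch_factor_pos:
  fixes q u :: real
  assumes "1 < q" "u < q"
  shows "0 < 1 - u / q ^ Suc r"
proof -
  have "u < q ^ Suc r"
    using assms power_increasing[of 1 "Suc r" q] by (simp del: power_Suc)
  moreover have "0 < q ^ Suc r"
    using assms(1) by simp
  ultimately show ?thesis
    by simp
qed

lemma qpoch_pos: "1 < q \<Longrightarrow> u < q \<Longrightarrow> 0 < qpoch q u n"
  unfolding qpoch_def by (rule prod_pos) (use qpoch_factor_pos in blast)

lemma qpoch_antimono:
  assumes "1 < q" "0 \<le> u" "u < q" "m \<le> n"
  shows "qpoch q u n \<le> qpoch q u m"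
proof -
  have "qpoch q u n = qpoch q u m * (\<Prod>r\<in>{m..<n}. 1 - u / q ^ Suc r)"
    unfolding qpoch_def using assms(4)
    by (metis prod.atLeastLessThan_concat zero_le lessThan_atLeast0)
  also have "\<dots> \<le> qpoch q u m * 1"
  proof (intro mult_left_mono prod_le_1 conjI)
    fix r
    show "0 \<le> 1 - u / q ^ Suc r"
      using qpoch_factor_pos[OF assms(1,3)] less_imp_le by blast
    show "1 - u / q ^ Suc r \<le> 1"
      using assms(1,2) by simp
    show "0 \<le> qpoch q u m"
      using qpoch_pos[OF assms(1,3)] less_imp_le by blast
  qed
  finally show ?thesis
    by simp
qed

lemma convergent_prod_qpoch:
  fixes q u :: real
  assumes "1 < q" "0 \<le> u" "u < q"
  shows "convergent_prod (\<lambda>r. 1 - u / q ^ Suc r)"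
proof -
  have "summable (\<lambda>r. u / q * (1 / q) ^ r)"
    by (rule summable_mult, rule summable_geometric) (use assms in simp)
  then have "summable (\<lambda>r. \<bar>- (u / q ^ Suc r)\<bar>)"
    using assms by (simp add: power_divide)
  moreover have "- (u / q ^ Suc r) \<noteq> -1" for r
    using qpoch_factor_pos[OF assms(1,3), of r] by linarith
  ultimately have "convergent_prod (\<lambda>r. 1 + - (u / q ^ Suc r))"
    by (rule summable_imp_convergent_prod_real)
  then show ?thesis
    by simp
qed

lemma qpoch_LIMSEQ:
  assumes "1 < q" "0 \<le> u" "u < q"
  shows "qpoch q u \<longlonglongrightarrow> qpoch_inf q u"
proof -
  have "(\<lambda>n. qpoch q u (Suc n)) \<longlonglongrightarrow> qpoch_inf q u"
    using convergent_prod_LIMSEQ[OF convergent_prod_qpoch[OF assms]]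
    by (simp add: qpoch_def qpoch_inf_def lessThan_Suc_atMost)
  then show ?thesis
    by (rule LIMSEQ_imp_Suc)
qed

lemma qpoch_inf_pos: "1 < q \<Longrightarrow> 0 \<le> u \<Longrightarrow> u < q \<Longrightarrow> 0 < qpoch_inf q u"
  unfolding qpoch_inf_def
  by (rule less_0_prodinf[OF convergent_prod_qpoch qpoch_factor_pos])

lemma qpoch_inf_le_qpoch:
  assumes "1 < q" "0 \<le> u" "u < q"
  shows "qpoch_inf q u \<le> qpoch q u n"
  by (rule LIMSEQ_le_const2[OF qpoch_LIMSEQ[OF assms]]) (use qpoch_antimono[OF assms] in blast)

lemma qpoch_inf_Suc_shift:
  assumes "1 < q" "0 \<le> u" "u < q"
  shows "qpoch_inf q u = (1 - u / q) * qpoch_inf q (u / q)"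
proof (rule LIMSEQ_unique)
  show "(\<lambda>n. qpoch q u (Suc n)) \<longlonglongrightarrow> qpoch_inf q u"
    using qpoch_LIMSEQ[OF assms] by (rule LIMSEQ_Suc)
  have "(\<lambda>n. (1 - u / q) * qpoch q (u / q) n) \<longlonglongrightarrow> (1 - u / q) * qpoch_inf q (u / q)"
    using assms(1) divide_q_bounds[OF assms] by (intro tendsto_mult_left qpoch_LIMSEQ)
  then show "(\<lambda>n. qpoch q u (Suc n)) \<longlonglongrightarrow> (1 - u / q) * qpoch_inf q (u / q)"
    using assms(1) by (simp add: qpoch_Suc_shift)
qed

section \<open>The masses of the partitions with a given number of parts\<close>

definition parts_mass :: "real \<Rightarrow> real \<Rightarrow> nat \<Rightarrow> real" where
  "parts_mass q u k = u ^ k / (q ^ k\<^sup>2 * qpoch q 1 k * qpoch q u k)"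

lemma parts_mass_0 [simp]: "parts_mass q u 0 = 1"
  by (simp add: parts_mass_def)

lemma parts_mass_nonneg: "1 < q \<Longrightarrow> 0 \<le> u \<Longrightarrow> u < q \<Longrightarrow> 0 \<le> parts_mass q u k"
  unfolding parts_mass_def by (simp add: qpoch_pos less_imp_le)

lemma parts_mass_Suc_shift:
  assumes "1 < q" "0 \<le> u" "u < q"
  shows "parts_mass q u (Suc i) * (1 - 1 / q ^ Suc i) =
    u / (q ^ Suc i * (1 - u / q)) * parts_mass q (u / q) i"
proof -
  define Q P R a b where "Q = q ^ Suc i" and "P = qpoch q 1 i" and "R = qpoch q (u / q) i"
    and "a = 1 - 1 / Q" and "b = 1 - u / q"
  have q0: "q \<noteq> 0"
    using assms(1) by simp
  have "(Suc i)\<^sup>2 = i\<^sup>2 + i + Suc i"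
    by (simp add: power2_eq_square)
  then have "q ^ (Suc i)\<^sup>2 = q ^ i\<^sup>2 * q ^ i * Q"
    unfolding Q_def by (simp only: power_add)
  then have lhs: "parts_mass q u (Suc i) = u * u ^ i / (q ^ i\<^sup>2 * q ^ i * Q * (P * a) * (b * R))"
    unfolding parts_mass_def qpoch_Suc[of q 1] qpoch_Suc_shift[OF q0, of u]
    by (simp add: Q_def P_def R_def a_def b_def)
  have rhs: "parts_mass q (u / q) i = u ^ i / (q ^ i * (q ^ i\<^sup>2 * P * R))"
    by (simp add: parts_mass_def P_def R_def power_divide)
  have "0 < P" "0 < R" "0 < a" "0 < b"
    using assms qpoch_factor_pos[of q 1 i] qpoch_factor_pos[of q u 0] divide_q_bounds[OF assms]
    by (auto simp: P_def R_def a_def b_def Q_def intro!: qpoch_pos)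
  with assms(1) have "parts_mass q u (Suc i) * a = u / (Q * b) * parts_mass q (u / q) i"
    unfolding lhs rhs by (simp add: field_simps)
  then show ?thesis
    by (simp only: Q_def a_def b_def)
qed

lemma sum_qpoch_Suc_diff:
  assumes "1 < q"
  shows "(\<Sum>j\<le>Suc K. f j * (1 - 1 / q ^ (Suc K - j)) / qpoch q 1 (Suc K - j)) =
    (\<Sum>j\<le>K. f j / qpoch q 1 (K - j))"
  unfolding sum.atMost_Suc
proof (simp, intro sum.cong refl)
  fix j
  assume "j \<in> {..K}"
  then have K_j: "Suc K - j = Suc (K - j)"
    by auto
  have "1 - 1 / q ^ Suc (K - j) \<noteq> 0"
    using qpoch_factor_pos[OF assms assms, of "K - j"] by linarith
  then show "f j * (1 - 1 / q ^ (Suc K - j)) / qpoch q 1 (Suc K - j) = f j / qpoch q 1 (K - j)"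
    unfolding K_j qpoch_Suc by (rule nonzero_mult_divide_mult_cancel_right)
qed

lemma parts_mass_convolution_Suc:
  assumes "1 < q" "0 \<le> u" "u < q"
  shows "(\<Sum>j\<le>Suc K. parts_mass q u j / qpoch q 1 (Suc K - j)) * (1 - 1 / q ^ Suc K) =
    (\<Sum>j\<le>K. parts_mass q u j / qpoch q 1 (K - j)) +
    u / (q ^ Suc K * (1 - u / q)) * (\<Sum>j\<le>K. parts_mass q (u / q) j / qpoch q 1 (K - j))"
proof -
  define Q where "Q = q ^ Suc K"
  have split: "parts_mass q u j * (1 - 1 / Q) / qpoch q 1 (Suc K - j) =
      parts_mass q u j * (1 - 1 / q ^ (Suc K - j)) / qpoch q 1 (Suc K - j) +
      parts_mass q u j * (1 - 1 / q ^ j) / (q ^ (Suc K - j) * qpoch q 1 (Suc K - j))"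
    if "j \<le> Suc K" for j
  proof -
    have "Q = q ^ j * q ^ (Suc K - j)"
      using that by (simp add: Q_def flip: power_add)
    then show ?thesis
      using assms(1) qpoch_pos[OF assms(1) assms(1), of "Suc K - j"] by (simp add: field_simps)
  qed
  have "(\<Sum>j\<le>Suc K. parts_mass q u j * (1 - 1 / q ^ j) / (q ^ (Suc K - j) * qpoch q 1 (Suc K - j))) =
      (\<Sum>i\<le>K. parts_mass q u (Suc i) * (1 - 1 / q ^ Suc i) / (q ^ (K - i) * qpoch q 1 (K - i)))"
    unfolding sum.atMost_Suc_shift by simp
  also have "\<dots> = (\<Sum>i\<le>K. u / (Q * (1 - u / q)) * (parts_mass q (u / q) i / qpoch q 1 (K - i)))"
  proof (rule sum.cong[OF refl])
    fix i
    assume "i \<in> {..K}"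
    then have "Q = q ^ Suc i * q ^ (K - i)"
      by (simp add: Q_def flip: power_add)
    then show "parts_mass q u (Suc i) * (1 - 1 / q ^ Suc i) / (q ^ (K - i) * qpoch q 1 (K - i)) =
        u / (Q * (1 - u / q)) * (parts_mass q (u / q) i / qpoch q 1 (K - i))"
      unfolding parts_mass_Suc_shift[OF assms] by (simp add: field_simps del: power_Suc)
  qed
  finally have second: "(\<Sum>j\<le>Suc K. parts_mass q u j * (1 - 1 / q ^ j) /
      (q ^ (Suc K - j) * qpoch q 1 (Suc K - j))) =
      u / (Q * (1 - u / q)) * (\<Sum>j\<le>K. parts_mass q (u / q) j / qpoch q 1 (K - j))"
    by (simp add: sum_distrib_left)
  show ?thesis
    unfolding Q_def[symmetric] sum_distrib_right times_divide_eq_left[symmetric] second[symmetric]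
      sum_qpoch_Suc_diff[OF assms(1), of "parts_mass q u" K, symmetric]
    by (simp add: split sum.distrib[symmetric] del: sum.atMost_Suc)
qed

lemma parts_mass_convolution:
  assumes "1 < q" "0 \<le> u" "u < q"
  shows "(\<Sum>j\<le>K. parts_mass q u j / qpoch q 1 (K - j)) = 1 / (qpoch q 1 K * qpoch q u K)"
  using assms(2,3)
proof (induction K arbitrary: u)
  case 0
  then show ?case
    by simp
next
  case (Suc K)
  define Q A B P b c where "Q = q ^ Suc K" and "A = qpoch q u K" and "B = qpoch q (u / q) K"
    and "P = qpoch q 1 K" and "b = 1 - u / q" and "c = 1 - u / Q"
  have uq: "0 \<le> u / q" "u / q < q"
    using divide_q_bounds[OF assms(1) Suc.prems] .
  have Ac: "A * c = b * B"
    using assms(1) unfolding A_def B_def b_def c_def Q_def qpoch_Suc[symmetric]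
    by (simp add: qpoch_Suc_shift)
  have "0 < A" "0 < B" "0 < P" "0 < c"
    using assms(1) Suc.prems uq qpoch_factor_pos[of q u K]
    by (auto simp: A_def B_def P_def c_def Q_def intro: qpoch_pos)
  have "(\<Sum>j\<le>Suc K. parts_mass q u j / qpoch q 1 (Suc K - j)) * (1 - 1 / Q) =
      1 / (P * A) + u / (Q * b) * (1 / (P * B))"
    using parts_mass_convolution_Suc[OF assms(1) Suc.prems, of K] Suc.IH[OF Suc.prems] Suc.IH[OF uq]
    by (simp add: Q_def A_def B_def P_def b_def)
  also have "\<dots> = 1 / (P * A) + u / Q / (P * (A * c))"
    unfolding Ac by (simp add: mult_ac)
  also have "\<dots> = (c + u / Q) / (P * (A * c))"
    using \<open>0 < A\<close> \<open>0 < P\<close> \<open>0 < c\<close> by (simp add: field_simps)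
  also have "c + u / Q = 1"
    by (simp add: c_def)
  also have "P * (A * c) = qpoch q 1 K * qpoch q u (Suc K)"
    by (simp add: P_def A_def c_def Q_def qpoch_Suc)
  finally have eq: "(\<Sum>j\<le>Suc K. parts_mass q u j / qpoch q 1 (Suc K - j)) * (1 - 1 / Q) =
      1 / (qpoch q 1 K * qpoch q u (Suc K))" .
  have "1 - 1 / Q \<noteq> 0"
    using qpoch_factor_pos[OF assms(1) assms(1), of K] by (simp only: Q_def)
  then have "(\<Sum>j\<le>Suc K. parts_mass q u j / qpoch q 1 (Suc K - j)) =
      1 / (qpoch q 1 K * qpoch q u (Suc K)) / (1 - 1 / Q)"
    using eq by (rule eq_divide_imp)
  then show ?case
    unfolding qpoch_Suc[of q 1 K] Q_def by (simp only: divide_divide_eq_left mult_ac)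
qed

lemma sum_parts_mass_scaled:
  assumes "1 < q" "0 \<le> u" "u < q"
  shows "(\<Sum>j\<le>K. parts_mass q u j * (qpoch q 1 K / qpoch q 1 (K - j))) = 1 / qpoch q u K"
proof -
  have "(\<Sum>j\<le>K. parts_mass q u j * (qpoch q 1 K / qpoch q 1 (K - j))) =
      qpoch q 1 K * (\<Sum>j\<le>K. parts_mass q u j / qpoch q 1 (K - j))"
    by (simp add: sum_distrib_left ac_simps)
  also have "\<dots> = 1 / qpoch q u K"
    using parts_mass_convolution[OF assms, of K] qpoch_pos[OF assms(1) assms(1), of K] by simp
  finally show ?thesis .
qed

lemma sum_parts_mass_le:
  assumes "1 < q" "0 \<le> u" "u < q"
  shows "(\<Sum>j\<le>J. parts_mass q u j) \<le> 1 / qpoch_inf q u"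
proof (rule LIMSEQ_le_const2)
  have "(\<lambda>n. qpoch q 1 (n + J) / qpoch q 1 (n + J - j)) \<longlonglongrightarrow> 1" if "j \<le> J" for j
  proof -
    have "(\<lambda>n. qpoch q 1 (n + J) / qpoch q 1 (n + (J - j))) \<longlonglongrightarrow> qpoch_inf q 1 / qpoch_inf q 1"
      using qpoch_LIMSEQ[OF assms(1) _ assms(1)] qpoch_inf_pos[OF assms(1) _ assms(1)]
      by (intro tendsto_divide LIMSEQ_ignore_initial_segment) auto
    then show ?thesis
      using that qpoch_inf_pos[OF assms(1) _ assms(1)] by simp
  qed
  then have "(\<lambda>n. \<Sum>j\<le>J. parts_mass q u j * (qpoch q 1 (n + J) / qpoch q 1 (n + J - j))) \<longlonglongrightarrow>
      (\<Sum>j\<le>J. parts_mass q u j * 1)"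
    by (intro tendsto_sum tendsto_mult_left) simp
  then show "(\<lambda>n. \<Sum>j\<le>J. parts_mass q u j * (qpoch q 1 (n + J) / qpoch q 1 (n + J - j))) \<longlonglongrightarrow>
      (\<Sum>j\<le>J. parts_mass q u j)"
    by simp
  show "\<exists>N. \<forall>n\<ge>N. (\<Sum>j\<le>J. parts_mass q u j * (qpoch q 1 (n + J) / qpoch q 1 (n + J - j))) \<le>
      1 / qpoch_inf q u"
  proof (intro exI allI impI)
    fix n :: nat
    have "(\<Sum>j\<le>J. parts_mass q u j * (qpoch q 1 (n + J) / qpoch q 1 (n + J - j))) \<le>
        (\<Sum>j\<le>n + J. parts_mass q u j * (qpoch q 1 (n + J) / qpoch q 1 (n + J - j)))"
      by (intro sum_mono2 mult_nonneg_nonneg divide_nonneg_pos)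
        (use parts_mass_nonneg[OF assms] qpoch_pos[OF assms(1) assms(1)] in \<open>auto intro: less_imp_le\<close>)
    also have "\<dots> = 1 / qpoch q u (n + J)"
      by (rule sum_parts_mass_scaled[OF assms])
    also have "\<dots> \<le> 1 / qpoch_inf q u"
      using qpoch_inf_le_qpoch[OF assms] qpoch_inf_pos[OF assms] by (simp add: frac_le)
    finally show "(\<Sum>j\<le>J. parts_mass q u j * (qpoch q 1 (n + J) / qpoch q 1 (n + J - j))) \<le>
        1 / qpoch_inf q u" .
  qed
qed

lemma sums_parts_mass:
  assumes "1 < q" "0 \<le> u" "u < q"
  shows "parts_mass q u sums (1 / qpoch_inf q u)"
proof -
  have lower: "1 / qpoch q u K \<le> (\<Sum>j\<le>K. parts_mass q u j)" for K
  proof -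
    have "qpoch q 1 K / qpoch q 1 (K - j) \<le> 1" for j
      using qpoch_antimono[OF assms(1) _ assms(1), of "K - j" K] qpoch_pos[OF assms(1) assms(1)]
      by simp
    then show ?thesis
      unfolding sum_parts_mass_scaled[OF assms, symmetric] using parts_mass_nonneg[OF assms]
      by (intro sum_mono mult_left_le) auto
  qed
  have "(\<lambda>K. 1 / qpoch q u K) \<longlonglongrightarrow> 1 / qpoch_inf q u"
    using qpoch_LIMSEQ[OF assms] qpoch_inf_pos[OF assms] by (intro tendsto_divide) auto
  then have "(\<lambda>K. \<Sum>j\<le>K. parts_mass q u j) \<longlonglongrightarrow> 1 / qpoch_inf q u"
    by (rule tendsto_sandwich[rotated 2]) (use lower sum_parts_mass_le[OF assms] in auto)
  then show ?thesis
    by (simp add: sums_def_le)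
qed

lemma sums_parts_mass_weighted:
  assumes "1 < q" "0 \<le> u" "u < q"
  shows "(\<lambda>k. (q ^ k - 1) * parts_mass q u k) sums (u / qpoch_inf q u)"
proof -
  have step: "(\<lambda>i. (q ^ Suc i - 1) * parts_mass q u (Suc i)) =
      (\<lambda>i. u / (1 - u / q) * parts_mass q (u / q) i)"
  proof
    fix i
    have "(q ^ Suc i - 1) * parts_mass q u (Suc i) =
        q ^ Suc i * (parts_mass q u (Suc i) * (1 - 1 / q ^ Suc i))"
      using assms(1) by (simp add: field_simps del: power_Suc)
    also have "\<dots> = u / (1 - u / q) * parts_mass q (u / q) i"
      unfolding parts_mass_Suc_shift[OF assms] using assms(1) by (simp del: power_Suc)
    finally show "(q ^ Suc i - 1) * parts_mass q u (Suc i) = u / (1 - u / q) * parts_mass q (u / q) i" .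
  qed
  have "(\<lambda>i. u / (1 - u / q) * parts_mass q (u / q) i) sums
      (u / (1 - u / q) * (1 / qpoch_inf q (u / q)))"
    by (intro sums_mult sums_parts_mass[OF assms(1) divide_q_bounds[OF assms]])
  moreover have "u / (1 - u / q) * (1 / qpoch_inf q (u / q)) = u / qpoch_inf q u"
    unfolding qpoch_inf_Suc_shift[OF assms] by simp
  ultimately have "(\<lambda>i. (q ^ Suc i - 1) * parts_mass q u (Suc i)) sums (u / qpoch_inf q u)"
    unfolding step by (simp only:)
  then show ?thesis
    using sums_Suc_iff[of "\<lambda>k. (q ^ k - 1) * parts_mass q u k"] by simp
qed

definition column_coeff :: "real \<Rightarrow> real \<Rightarrow> nat \<Rightarrow> nat \<Rightarrow> real" where
  "column_coeff q u k j = u ^ k / (q ^ k\<^sup>2 * qpoch q 1 (k - j))"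

lemma column_coeff_nonneg: "1 < q \<Longrightarrow> 0 \<le> u \<Longrightarrow> 0 \<le> column_coeff q u k j"
  unfolding column_coeff_def
  by (intro divide_nonneg_pos mult_pos_pos) (auto intro: qpoch_pos)

lemma column_coeff_diag_less_1:
  assumes "1 < q" "0 \<le> u" "u < q" "0 < k"
  shows "column_coeff q u k k < 1"
proof -
  have "u ^ k < q ^ k"
    using assms by (intro power_strict_mono) auto
  also have "q ^ k \<le> q ^ k\<^sup>2"
    using assms(1) by (intro power_increasing) (auto simp: power2_eq_square)
  finally show ?thesis
    using assms(1) by (simp add: column_coeff_def)
qed

lemma parts_mass_recursion:
  assumes "1 < q" "0 \<le> u" "u < q"
  shows "parts_mass q u k = (\<Sum>j\<le>k. column_coeff q u k j * parts_mass q u j)"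
proof -
  have "(\<Sum>j\<le>k. column_coeff q u k j * parts_mass q u j) =
      u ^ k / q ^ k\<^sup>2 * (\<Sum>j\<le>k. parts_mass q u j / qpoch q 1 (k - j))"
    by (simp add: column_coeff_def sum_distrib_left)
  also have "\<dots> = u ^ k / q ^ k\<^sup>2 * (1 / (qpoch q 1 k * qpoch q u k))"
    by (simp only: parts_mass_convolution[OF assms])
  also have "\<dots> = parts_mass q u k"
    by (simp add: parts_mass_def)
  finally show ?thesis ..
qed

section \<open>Removing the first column of a partition\<close>

lemma is_partition_empty [simp]: "is_partition {#}"
  by (simp add: is_partition_def)

lemma is_partition_add_mset [simp]: "is_partition (add_mset x M) \<longleftrightarrow> 0 < x \<and> is_partition M"
  by (auto simp: is_partition_def)

lemma psize_empty [simp]: "psize {#} = 0"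
  by (simp add: psize_def)

lemma psize_add_mset [simp]: "psize (add_mset x M) = x + psize M"
  by (simp add: psize_def)

lemma conj_part_empty [simp]: "conj_part {#} i = 0"
  by (simp add: conj_part_def)

lemma conj_part_add_mset: "conj_part (add_mset x M) i = conj_part M i + (if i \<le> x then 1 else 0)"
  by (simp add: conj_part_def)

lemma conj_part_Suc_le: "conj_part M (Suc i) \<le> conj_part M i"
  by (induction M) (auto simp: conj_part_add_mset)

lemma mult_part_eq_conj_part_diff: "mult_part M i = conj_part M i - conj_part M (Suc i)"
proof (induction M)
  case empty
  then show ?case
    by (simp add: mult_part_def)
next
  case (add x M)
  then show ?case
    using conj_part_Suc_le[of M i] by (auto simp: mult_part_def conj_part_add_mset)
qed

lemma conj_part_1: "is_partition M \<Longrightarrow> conj_part M 1 = size M"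
  by (induction M) (auto simp: conj_part_add_mset)

lemma conj_part_eq_0: "psize M < i \<Longrightarrow> conj_part M i = 0"
  by (induction M) (auto simp: conj_part_add_mset)

lemma size_le_psize: "is_partition M \<Longrightarrow> size M \<le> psize M"
  by (induction M) auto

lemma finite_partitions_psize_le: "finite {M. is_partition M \<and> psize M \<le> n}"
proof (rule finite_subset)
  show "{M. is_partition M \<and> psize M \<le> n} \<subseteq> (\<Union>s\<le>n. multisets_of_size {..n} s)"
  proof safe
    fix M
    assume M: "is_partition M" "psize M \<le> n"
    have "set_mset M \<subseteq> {..n}"
      using M(2) by (auto simp: psize_def dest!: multi_member_split)
    moreover have "size M \<le> n"
      using M size_le_psize by (meson order.trans)
    ultimately show "M \<in> (\<Union>s\<le>n. multisets_of_size {..n} s)"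
      by (auto simp: multisets_of_size_def)
  qed
qed auto

definition drop_column :: "nat multiset \<Rightarrow> nat multiset" where
  "drop_column M = image_mset (\<lambda>x. x - 1) (filter_mset (\<lambda>x. 2 \<le> x) M)"

definition add_column :: "nat \<Rightarrow> nat multiset \<Rightarrow> nat multiset" where
  "add_column k M = image_mset Suc M + replicate_mset (k - size M) 1"

lemma drop_column_empty [simp]: "drop_column {#} = {#}"
  by (simp add: drop_column_def)

lemma drop_column_add_mset:
  "drop_column (add_mset x M) = (if 2 \<le> x then add_mset (x - 1) (drop_column M) else drop_column M)"
  by (simp add: drop_column_def)

lemma is_partition_drop_column: "is_partition (drop_column M)"
  by (induction M) (auto simp: drop_column_add_mset)

lemma size_drop_column_le: "size (drop_column M) \<le> size M"
  by (induction M) (auto simp: drop_column_add_mset)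

lemma psize_drop_column: "is_partition M \<Longrightarrow> psize M = size M + psize (drop_column M)"
  by (induction M) (auto simp: drop_column_add_mset)

lemma conj_part_drop_column: "0 < i \<Longrightarrow> conj_part (drop_column M) i = conj_part M (Suc i)"
  by (induction M) (auto simp: drop_column_add_mset conj_part_add_mset)

lemma mult_part_drop_column: "0 < i \<Longrightarrow> mult_part (drop_column M) i = mult_part M (Suc i)"
  by (simp add: mult_part_eq_conj_part_diff conj_part_drop_column)

lemma mult_part_1:
  assumes "is_partition M"
  shows "mult_part M 1 = size M - size (drop_column M)"
proof -
  have "conj_part M (Suc 1) = size (drop_column M)"
    using conj_part_drop_column[of 1 M] conj_part_1[OF is_partition_drop_column] by simp
  then show ?thesis
    using conj_part_1[OF assms] by (simp only: mult_part_eq_conj_part_diff)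
qed

lemma add_column_drop_column: "is_partition M \<Longrightarrow> add_column (size M) (drop_column M) = M"
proof (induction M)
  case empty
  then show ?case
    by (simp add: add_column_def)
next
  case (add x M)
  then show ?case
    using size_drop_column_le[of M]
    by (auto simp: add_column_def drop_column_add_mset Suc_diff_le)
qed

lemma drop_column_add_column: "is_partition M \<Longrightarrow> drop_column (add_column k M) = M"
proof -
  have "drop_column (N + replicate_mset n 1) = drop_column N" for N n
    by (induction n) (auto simp: drop_column_add_mset)
  moreover assume "is_partition M"
  then have "drop_column (image_mset Suc M) = M"
    by (induction M) (auto simp: drop_column_add_mset)
  ultimately show ?thesis
    by (simp add: add_column_def)
qed

lemma size_add_column: "size M \<le> k \<Longrightarrow> size (add_column k M) = k"
  by (simp add: add_column_def)

lemma is_partition_add_column: "is_partition (add_column k M)"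
  by (auto simp: add_column_def is_partition_def)

section \<open>The weight of a partition\<close>

definition pdenom :: "real \<Rightarrow> nat multiset \<Rightarrow> real" where
  "pdenom q M = (\<Prod>i=1..psize M. q ^ ((conj_part M i)^2) * qpoch_inv q (mult_part M i))"

definition pweight :: "real \<Rightarrow> real \<Rightarrow> nat multiset \<Rightarrow> real" where
  "pweight q u M = u ^ psize M / pdenom q M"

lemma pdenom_pos: "1 < q \<Longrightarrow> 0 < pdenom q M"
  unfolding pdenom_def qpoch_inv_eq_qpoch by (intro prod_pos mult_pos_pos qpoch_pos) auto

lemma pweight_nonneg: "1 < q \<Longrightarrow> 0 \<le> u \<Longrightarrow> 0 \<le> pweight q u M"
  unfolding pweight_def using pdenom_pos[of q M] by simp

lemma pweight_empty [simp]: "pweight q u {#} = 1"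
  by (simp add: pweight_def pdenom_def)

lemma pdenom_drop_column:
  assumes "is_partition M" "0 < size M"
  shows "pdenom q M =
    q ^ (size M)\<^sup>2 * qpoch q 1 (size M - size (drop_column M)) * pdenom q (drop_column M)"
proof -
  define f where "f N i = q ^ ((conj_part N i)^2) * qpoch_inv q (mult_part N i)" for N i
  define D where "D = drop_column M"
  have psize_M: "psize M = Suc (size M - 1 + psize D)"
    using psize_drop_column[OF assms(1)] assms(2) by (simp add: D_def)
  have "pdenom q M = f M 1 * (\<Prod>i=Suc 1..Suc (size M - 1 + psize D). f M i)"
    unfolding pdenom_def f_def[symmetric] psize_M by (rule prod.atLeast_Suc_atMost) simp
  also have "(\<Prod>i=Suc 1..Suc (size M - 1 + psize D). f M i) = (\<Prod>i=1..size M - 1 + psize D. f D i)"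
    unfolding prod.shift_bounds_cl_Suc_ivl
    by (intro prod.cong refl) (simp add: f_def D_def conj_part_drop_column mult_part_drop_column)
  also have "\<dots> = (\<Prod>i=1..psize D. f D i)"
    by (intro prod.mono_neutral_right)
      (auto simp: f_def conj_part_eq_0 mult_part_eq_conj_part_diff qpoch_inv_def)
  also have "f M 1 = q ^ (size M)\<^sup>2 * qpoch q 1 (size M - size D)"
    unfolding f_def D_def conj_part_1[OF assms(1)] mult_part_1[OF assms(1)] qpoch_inv_eq_qpoch ..
  finally show ?thesis
    by (simp add: pdenom_def f_def D_def)
qed

lemma pweight_drop_column:
  assumes "is_partition M" "0 < size M"
  shows "pweight q u M = column_coeff q u (size M) (size (drop_column M)) * pweight q u (drop_column M)"
  unfolding pweight_def column_coeff_def pdenom_drop_column[OF assms]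
    psize_drop_column[OF assms(1)] power_add
  by (simp only: times_divide_times_eq)

section \<open>Summation over the partitions with a given number of parts\<close>

definition partitions_of_length :: "nat \<Rightarrow> nat multiset set" where
  "partitions_of_length k = {M. is_partition M \<and> size M = k}"

lemma partitions_of_length_0: "partitions_of_length 0 = {{#}}"
  by (auto simp: partitions_of_length_def)

lemma has_sum_pweight_drop_column:
  assumes "0 < k"
  shows "(pweight q u has_sum X) (partitions_of_length k) \<longleftrightarrow>
    ((\<lambda>D. column_coeff q u k (size D) * pweight q u D) has_sum X) {D. is_partition D \<and> size D \<le> k}"
  by (rule has_sum_reindex_bij_witness[where i = "add_column k" and j = drop_column])
    (use assms in \<open>auto simp: partitions_of_length_def add_column_drop_column drop_column_add_column
      size_drop_column_le is_partition_drop_column is_partition_add_column size_add_column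
      pweight_drop_column\<close>)

lemma sum_pweight_drop_column:
  assumes "A \<subseteq> partitions_of_length k" "0 < k"
  shows "sum (pweight q u) A = sum (\<lambda>D. column_coeff q u k (size D) * pweight q u D) (drop_column ` A)"
proof -
  have "inj_on drop_column A"
    by (rule inj_on_inverseI[where g = "add_column k"])
      (use assms in \<open>auto simp: partitions_of_length_def add_column_drop_column\<close>)
  then show ?thesis
    using assms by (auto simp: sum.reindex partitions_of_length_def pweight_drop_column intro!: sum.cong)
qed

lemma drop_column_psize_le:
  assumes "M \<in> partitions_of_length k" "psize M \<le> N"
  shows "is_partition (drop_column M) \<and> size (drop_column M) \<le> k \<and> psize (drop_column M) \<le> N - k"
  using assms size_drop_column_le[of M] psize_drop_column[of M] is_partition_drop_column
  by (auto simp: partitions_of_length_def)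

lemma sum_partitions_size_le:
  fixes c :: "nat \<Rightarrow> real" and f :: "nat multiset \<Rightarrow> real"
  shows "sum (\<lambda>D. c (size D) * f D) {D. is_partition D \<and> size D \<le> k \<and> psize D \<le> N} =
    (\<Sum>j\<le>k. c j * sum f {D \<in> partitions_of_length j. psize D \<le> N})"
proof -
  define S where "S j = {D \<in> partitions_of_length j. psize D \<le> N}" for j
  have U: "{D. is_partition D \<and> size D \<le> k \<and> psize D \<le> N} = (\<Union>j\<le>k. S j)"
    by (auto simp: S_def partitions_of_length_def)
  have "sum (\<lambda>D. c (size D) * f D) {D. is_partition D \<and> size D \<le> k \<and> psize D \<le> N} =
      (\<Sum>j\<le>k. sum (\<lambda>D. c (size D) * f D) (S j))"
    unfolding U
  proof (rule sum.UNION_disjoint)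
    show "\<forall>j\<in>{..k}. finite (S j)"
      using finite_partitions_psize_le[of N]
      by (auto simp: S_def partitions_of_length_def elim!: rev_finite_subset)
  qed (auto simp: S_def partitions_of_length_def)
  also have "\<dots> = (\<Sum>j\<le>k. c j * sum f (S j))"
  proof (rule sum.cong[OF refl])
    fix j
    show "sum (\<lambda>D. c (size D) * f D) (S j) = c j * sum f (S j)"
      unfolding sum_distrib_left by (rule sum.cong) (auto simp: S_def partitions_of_length_def)
  qed
  finally show ?thesis
    by (simp only: S_def)
qed

lemma sum_pweight_le_parts_mass:
  assumes "1 < q" "0 \<le> u" "u < q"
  shows "sum (pweight q u) {M \<in> partitions_of_length k. psize M \<le> N} \<le> parts_mass q u k"
proof (induction N arbitrary: k rule: less_induct)
  case (less N)
  define A where "A = {M \<in> partitions_of_length k. psize M \<le> N}"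
  define c where "c = column_coeff q u k"
  consider "k = 0" | "A = {}" | "0 < k" "A \<noteq> {}"
    by blast
  then have "sum (pweight q u) A \<le> parts_mass q u k"
  proof cases
    case 1
    then have "A = {{#}}"
      by (auto simp: A_def partitions_of_length_0)
    with 1 show ?thesis
      by simp
  next
    case 2
    then show ?thesis
      using parts_mass_nonneg[OF assms] by simp
  next
    case 3
    then obtain M0 where "M0 \<in> A"
      by blast
    then have "k \<le> N"
      using size_le_psize[of M0] by (auto simp: A_def partitions_of_length_def)
    with \<open>0 < k\<close> have "N - k < N"
      by simp
    define B where "B = {D. is_partition D \<and> size D \<le> k \<and> psize D \<le> N - k}"
    have "sum (pweight q u) A = sum (\<lambda>D. c (size D) * pweight q u D) (drop_column ` A)"
      unfolding c_def using \<open>0 < k\<close> by (intro sum_pweight_drop_column) (auto simp: A_def)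
    also have "\<dots> \<le> sum (\<lambda>D. c (size D) * pweight q u D) B"
    proof (rule sum_mono2)
      show "finite B"
        by (rule finite_subset[OF _ finite_partitions_psize_le[of "N - k"]]) (auto simp: B_def)
      show "drop_column ` A \<subseteq> B"
        using drop_column_psize_le by (auto simp: A_def B_def)
      show "0 \<le> c (size D) * pweight q u D" for D
        unfolding c_def using assms
        by (intro mult_nonneg_nonneg column_coeff_nonneg pweight_nonneg) auto
    qed
    also have "\<dots> = (\<Sum>j\<le>k. c j * sum (pweight q u) {D \<in> partitions_of_length j. psize D \<le> N - k})"
      unfolding B_def by (rule sum_partitions_size_le)
    also have "\<dots> \<le> (\<Sum>j\<le>k. c j * parts_mass q u j)"
      using less.IH[OF \<open>N - k < N\<close>] column_coeff_nonneg[OF assms(1,2)]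
      by (intro sum_mono mult_left_mono) (auto simp: c_def)
    also have "\<dots> = parts_mass q u k"
      unfolding c_def by (rule parts_mass_recursion[OF assms, symmetric])
    finally show ?thesis .
  qed
  then show ?case
    by (simp only: A_def)
qed

lemma pweight_summable_on:
  assumes "1 < q" "0 \<le> u" "u < q"
  shows "pweight q u summable_on partitions_of_length k"
proof (rule nonneg_bdd_above_summable_on)
  show "0 \<le> pweight q u M" for M
    using pweight_nonneg[OF assms(1,2)] .
  show "bdd_above (sum (pweight q u) ` {F. F \<subseteq> partitions_of_length k \<and> finite F})"
  proof (rule bdd_aboveI2)
    fix F
    assume F: "F \<in> {F. F \<subseteq> partitions_of_length k \<and> finite F}"
    define N where "N = (\<Sum>M\<in>F. psize M)"
    have "F \<subseteq> {M \<in> partitions_of_length k. psize M \<le> N}"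
      using F by (auto simp: N_def intro: member_le_sum)
    moreover have "finite {M \<in> partitions_of_length k. psize M \<le> N}"
      by (rule finite_subset[OF _ finite_partitions_psize_le[of N]])
        (auto simp: partitions_of_length_def)
    ultimately have "sum (pweight q u) F \<le> sum (pweight q u) {M \<in> partitions_of_length k. psize M \<le> N}"
      using pweight_nonneg[OF assms(1,2)] by (intro sum_mono2) auto
    also have "\<dots> \<le> parts_mass q u k"
      by (rule sum_pweight_le_parts_mass[OF assms])
    finally show "sum (pweight q u) F \<le> parts_mass q u k" .
  qed
qed

lemma has_sum_partitions_size_le:
  fixes f :: "nat multiset \<Rightarrow> real"
  assumes "\<And>j. j \<le> k \<Longrightarrow> (f has_sum s j) (partitions_of_length j)"
  shows "((\<lambda>D. c (size D) * f D) has_sum (\<Sum>j\<le>k. c j * s j)) {D. is_partition D \<and> size D \<le> k}"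
proof -
  have "((\<lambda>D. c (size D) * f D) has_sum (\<Sum>j\<le>k. c j * s j)) (\<Union>j\<le>k. partitions_of_length j)"
  proof (rule sum_has_sum)
    fix j
    assume "j \<in> {..k}"
    then have "((\<lambda>D. c j * f D) has_sum c j * s j) (partitions_of_length j)"
      using assms by (intro has_sum_cmult_right) auto
    then show "((\<lambda>D. c (size D) * f D) has_sum c j * s j) (partitions_of_length j)"
      by (rule has_sum_cong[THEN iffD1, rotated]) (simp add: partitions_of_length_def)
  qed (auto simp: partitions_of_length_def)
  moreover have "(\<Union>j\<le>k. partitions_of_length j) = {D. is_partition D \<and> size D \<le> k}"
    by (auto simp: partitions_of_length_def)
  ultimately show ?thesis
    by simp
qed

lemma has_sum_pweight_partitions_of_length:
  assumes "1 < q" "0 \<le> u" "u < q"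
  shows "(pweight q u has_sum parts_mass q u k) (partitions_of_length k)"
proof (induction k rule: less_induct)
  case (less k)
  show ?case
  proof (cases "k = 0")
    case True
    then show ?thesis
      by (simp add: partitions_of_length_0 has_sum_finiteI)
  next
    case False
    define c where "c = column_coeff q u k"
    define X where "X = infsum (pweight q u) (partitions_of_length k)"
    define s where "s j = (if j = k then X else parts_mass q u j)" for j
    have X: "(pweight q u has_sum X) (partitions_of_length k)"
      using pweight_summable_on[OF assms] by (simp add: X_def)
    have "((\<lambda>D. c (size D) * pweight q u D) has_sum (\<Sum>j\<le>k. c j * s j))
        {D. is_partition D \<and> size D \<le> k}"
      using X less.IH by (intro has_sum_partitions_size_le) (auto simp: s_def)
    moreover have "((\<lambda>D. c (size D) * pweight q u D) has_sum X) {D. is_partition D \<and> size D \<le> k}"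
      using X has_sum_pweight_drop_column[OF \<open>k \<noteq> 0\<close>[unfolded neq0_conv]] by (simp add: c_def)
    ultimately have "X = (\<Sum>j\<le>k. c j * s j)"
      using has_sum_unique by metis
    also have "\<dots> = c k * X + (\<Sum>j<k. c j * parts_mass q u j)"
      by (simp add: s_def flip: lessThan_Suc_atMost)
    finally have "X * (1 - c k) = (\<Sum>j<k. c j * parts_mass q u j)"
      by (simp add: algebra_simps)
    moreover have "parts_mass q u k * (1 - c k) = (\<Sum>j<k. c j * parts_mass q u j)"
      using parts_mass_recursion[OF assms, of k]
      by (simp add: c_def algebra_simps flip: lessThan_Suc_atMost)
    ultimately have "X * (1 - c k) = parts_mass q u k * (1 - c k)"
      by simp
    moreover have "c k < 1"
      unfolding c_def using assms False by (intro column_coeff_diag_less_1) auto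
    ultimately show ?thesis
      using X by simp
  qed
qed

lemma has_sum_UnionI:
  fixes f :: "'a \<Rightarrow> real"
  assumes "\<And>x. x \<in> A \<Longrightarrow> (f has_sum g x) (B x)" and "(g has_sum S) A"
    and "\<And>x y. x \<in> A \<Longrightarrow> y \<in> B x \<Longrightarrow> 0 \<le> f y" and "disjoint_family_on B A"
  shows "(f has_sum S) (\<Union>x\<in>A. B x)"
proof -
  have inj: "inj_on snd (Sigma A B)"
    using assms(4) by (force simp: disjoint_family_on_def inj_on_def)
  have img: "snd ` Sigma A B = (\<Union>x\<in>A. B x)"
    by force
  have "f summable_on (\<Union>x\<in>A. B x)"
    using assms(1) has_sum_imp_summable[OF assms(2)] assms(3,4) by (rule summable_on_UnionI)
  then have "(f \<circ> snd) summable_on Sigma A B"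
    using summable_on_reindex[OF inj, where g = f] img by simp
  then have "((f \<circ> snd) has_sum S) (Sigma A B)"
    using assms(1,2) by (intro has_sum_SigmaI[where g = g]) auto
  then show ?thesis
    using has_sum_reindex[OF inj, where g = f] img by simp
qed

lemma has_sum_pweight_weighted:
  assumes "1 < q" "0 \<le> u" "u < q"
  shows "((\<lambda>M. (q ^ size M - 1) * pweight q u M) has_sum u / qpoch_inf q u) {M. is_partition M}"
proof -
  have one_le: "1 \<le> q ^ k" for k
    using assms(1) by simp
  have "((\<lambda>M. (q ^ size M - 1) * pweight q u M) has_sum u / qpoch_inf q u)
      (\<Union>k\<in>UNIV. partitions_of_length k)"
  proof (rule has_sum_UnionI)
    show "((\<lambda>M. (q ^ size M - 1) * pweight q u M) has_sum (q ^ k - 1) * parts_mass q u k)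
        (partitions_of_length k)" for k
      using has_sum_cmult_right[OF has_sum_pweight_partitions_of_length[OF assms], of "q ^ k - 1" k]
      by (rule has_sum_cong[THEN iffD1, rotated]) (simp add: partitions_of_length_def)
    show "((\<lambda>k. (q ^ k - 1) * parts_mass q u k) has_sum u / qpoch_inf q u) UNIV"
      using sums_parts_mass_weighted[OF assms] one_le parts_mass_nonneg[OF assms]
      by (intro sums_nonneg_imp_has_sum) simp_all
    show "0 \<le> (q ^ size M - 1) * pweight q u M" for M
      using one_le pweight_nonneg[OF assms(1,2)] by simp
  qed (auto simp: disjoint_family_on_def partitions_of_length_def)
  moreover have "(\<Union>k\<in>UNIV. partitions_of_length k) = {M. is_partition M}"
    by (auto simp: partitions_of_length_def)
  ultimately show ?thesis
    by simp
qed

text \<open>For the empty partition both sides vanish through the factor q^0 - 1, whatever the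
  truncated exponent psize M - 1 gives.\<close>

lemma N_uq_eq_pweight:
  assumes "0 < u" "is_partition M"
  shows "N_uq u q M = qpoch_inf q u / u * ((q ^ size M - 1) * pweight q u M)"
proof (cases "psize M = 0")
  case True
  then show ?thesis
    using size_le_psize[OF assms(2)] conj_part_1[OF assms(2)] by (simp add: N_uq_def)
next
  case False
  then have "u ^ psize M = u * u ^ (psize M - 1)"
    by (simp flip: power_Suc)
  then show ?thesis
    unfolding N_uq_def pdenom_def[symmetric] qpoch_inf_def[symmetric] conj_part_1[OF assms(2)]
    using assms(1) by (simp add: pweight_def)
qed

theorem lemma3p1:
  fixes u q :: real
  assumes "q > 1" and "0 < u" and "u < 1"
  shows "(\<forall>lam. is_partition lam \<and> psize lam > 0 \<longrightarrow> N_uq u q lam \<ge> 0) \<and>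
         (N_uq u q has_sum 1) {lam. is_partition lam \<and> psize lam > 0}"
proof -
  have q: "1 < q" "0 \<le> u" "u < q"
    using assms by auto
  define C where "C = qpoch_inf q u"
  have "0 < C"
    unfolding C_def using q by (rule qpoch_inf_pos)
  have "(N_uq u q has_sum C / u * (u / C)) {M. is_partition M}"
    using has_sum_cmult_right[OF has_sum_pweight_weighted[OF q, folded C_def], of "C / u"]
    by (rule has_sum_cong[THEN iffD1, rotated]) (simp add: N_uq_eq_pweight[OF assms(2)] C_def)
  then have "(N_uq u q has_sum 1) {lam. is_partition lam \<and> psize lam > 0}"
    using \<open>0 < C\<close> assms(2)
    by (subst has_sum_cong_neutral[where T = "{M. is_partition M}"])
      (auto simp: N_uq_def dest: size_le_psize)
  moreover have "N_uq u q M \<ge> 0" if "is_partition M" for M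
    unfolding N_uq_eq_pweight[OF assms(2) that] using \<open>0 < C\<close> q pweight_nonneg[OF q(1,2)]
    by (simp add: C_def)
  ultimately show ?thesis
    by blast
qed

end
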